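(* Let $f:\mathcal{X}\to\mathbb{R}$ be any function, let $\varphi:\mathcal{X}\to\mathcal{X}$ be any map, and let $\mathcal{A}\subset\mathcal{X}$ be a finite set such that $D:=\sum_{x\in\mathcal{A}}|f(\varphi(x))-f(x)|^2\neq 0$. Define $$WCM(\varphi;f):=1-\sqrt{\frac{\min_{\pi\in \Pi(\mathcal{A})}\sum_{x\in\mathcal{A}}|f(\varphi(\pi(x)))-f(x)|^2}{D}},$$ where $\Pi(\mathcal{A})$ is the set of all permutations (bijections) $\pi:\mathcal{A}\to\mathcal{A}$. Then $WCM(\varphi;f)\in[0,1]$. Moreover: (i) $WCM(\varphi;f)=0$ if and only if the natural pairing $\{(f(x),f(\varphi(x)))\}_{x\in\mathcal{A}}$ maximizes the covariance among all pairings $\{(f(x),f(\varphi(\pi(x))))\}_{x\in\mathcal{A}}$, $\pi\in\Pi(\mathcal{A})$ (equivalently, the identity permutation attains the minimum in the numerator); (ii) $WCM(\varphi;f)=1$ if and only if there exists a permutation $\pi\in\Pi(\mathcal{A})$ which is not the identity such that $f(x)=f(\varphi(\pi(x)))$ for every $x\in\mathcal{A}$; (iii) for every $\lambda>0$, $WCM(\varphi;f)=WCM(\varphi;\lambda f)$.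
   Context: Here $f$ plays the role of a fixed black-box real-valued predictor, $\varphi$ a perturbation of inputs, and $\mathcal{A}$ a finite auditing set; $WCM$ is called the Wasserstein Coherence Metric. *)

theory Defs
  imports Complex_Main "HOL-Combinatorics.Permutations"
begin

definition pairing_cost :: "('x \<Rightarrow> real) \<Rightarrow> ('x \<Rightarrow> 'x) \<Rightarrow> 'x set \<Rightarrow> ('x \<Rightarrow> 'x) \<Rightarrow> real" where
  "pairing_cost f \<phi> A \<pi> = (\<Sum>x\<in>A. \<bar>f (\<phi> (\<pi> x)) - f x\<bar>^2)"

definition wcm_D :: "('x \<Rightarrow> real) \<Rightarrow> ('x \<Rightarrow> 'x) \<Rightarrow> 'x set \<Rightarrow> real" where
  "wcm_D f \<phi> A = (\<Sum>x\<in>A. \<bar>f (\<phi> x) - f x\<bar>^2)"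

definition WCM :: "('x \<Rightarrow> 'x) \<Rightarrow> ('x \<Rightarrow> real) \<Rightarrow> 'x set \<Rightarrow> real" where
  "WCM \<phi> f A = 1 - sqrt (Min ((\<lambda>\<pi>. pairing_cost f \<phi> A \<pi>) ` {\<pi>. \<pi> permutes A}) / wcm_D f \<phi> A)"

definition emp_mean :: "'x set \<Rightarrow> ('x \<Rightarrow> real) \<Rightarrow> real" where
  "emp_mean A u = (\<Sum>x\<in>A. u x) / real (card A)"

definition emp_cov :: "'x set \<Rightarrow> ('x \<Rightarrow> real) \<Rightarrow> ('x \<Rightarrow> real) \<Rightarrow> real" where
  "emp_cov A u v = (\<Sum>x\<in>A. (u x - emp_mean A u) * (v x - emp_mean A v)) / real (card A)"

end

theory Submission
  imports Defs
begin

text \<open>Because \<open>\<pi>\<close> permutes \<open>A\<close>, the multiset of values \<open>f (\<phi> (\<pi> x))\<close> does not depend on \<open>\<pi>\<close>: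
  only the cross term \<open>\<Sum>x\<in>A. f x * f (\<phi> (\<pi> x))\<close> of the expanded cost does, and it also
  determines the covariance of the pairing up to a \<open>\<pi>\<close>-independent constant. Hence minimising
  the cost is maximising the covariance. The identity is a competitor, so the minimal cost lies
  between \<open>0\<close> and \<open>D\<close>, and rescaling \<open>f\<close> by \<open>c\<close> multiplies both by \<open>c\<^sup>2\<close>.\<close>

definition min_pairing_cost :: "('x \<Rightarrow> real) \<Rightarrow> ('x \<Rightarrow> 'x) \<Rightarrow> 'x set \<Rightarrow> real" where
  "min_pairing_cost f \<phi> A = Min (pairing_cost f \<phi> A ` {\<pi>. \<pi> permutes A})"

lemma WCM_eq: "WCM \<phi> f A = 1 - sqrt (min_pairing_cost f \<phi> A / wcm_D f \<phi> A)"
  by (simp add: WCM_def min_pairing_cost_def)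

lemma pairing_cost_nonneg: "0 \<le> pairing_cost f \<phi> A \<pi>"
  by (simp add: pairing_cost_def sum_nonneg)

lemma pairing_cost_id: "pairing_cost f \<phi> A id = wcm_D f \<phi> A"
  by (simp add: pairing_cost_def wcm_D_def)

lemma wcm_D_nonneg: "0 \<le> wcm_D f \<phi> A"
  using pairing_cost_nonneg[of f \<phi> A id] by (simp add: pairing_cost_id)

lemma pairing_cost_eq_0_iff:
  assumes "finite A"
  shows "pairing_cost f \<phi> A \<pi> = 0 \<longleftrightarrow> (\<forall>x\<in>A. f x = f (\<phi> (\<pi> x)))"
  using assms by (auto simp: pairing_cost_def sum_nonneg_eq_0_iff)

lemma pairing_cost_scale:
  "pairing_cost (\<lambda>x. c * f x) \<phi> A \<pi> = c\<^sup>2 * pairing_cost f \<phi> A \<pi>"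
  unfolding pairing_cost_def sum_distrib_left
  by (intro sum.cong) (auto simp: power2_eq_square abs_mult algebra_simps)

lemma wcm_D_scale: "wcm_D (\<lambda>x. c * f x) \<phi> A = c\<^sup>2 * wcm_D f \<phi> A"
  using pairing_cost_scale[of c f \<phi> A id] by (simp add: pairing_cost_id)

lemma sum_permutes_comp:
  fixes u :: "'x \<Rightarrow> 'a::comm_monoid_add"
  assumes "\<pi> permutes A"
  shows "(\<Sum>x\<in>A. u (\<pi> x)) = (\<Sum>x\<in>A. u x)"
  using sum.permute[OF assms, of u] by (simp add: comp_def)

lemma pairing_cost_expand:
  assumes "\<pi> permutes A"
  shows "pairing_cost f \<phi> A \<pi> =
    (\<Sum>x\<in>A. (f (\<phi> x))\<^sup>2) + (\<Sum>x\<in>A. (f x)\<^sup>2) - 2 * (\<Sum>x\<in>A. f x * f (\<phi> (\<pi> x)))"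
proof -
  have "pairing_cost f \<phi> A \<pi> =
      (\<Sum>x\<in>A. (f (\<phi> (\<pi> x)))\<^sup>2) + (\<Sum>x\<in>A. (f x)\<^sup>2) - 2 * (\<Sum>x\<in>A. f x * f (\<phi> (\<pi> x)))"
    unfolding pairing_cost_def sum_distrib_left sum.distrib[symmetric] sum_subtractf[symmetric]
    by (intro sum.cong) (auto simp: power2_eq_square algebra_simps)
  then show ?thesis
    using sum_permutes_comp[OF assms, of "\<lambda>y. (f (\<phi> y))\<^sup>2"] by simp
qed

text \<open>No hypothesis on \<open>A\<close> is needed: if \<open>card A = 0\<close> (\<open>A\<close> empty or infinite) both sides are \<open>0\<close>.\<close>

lemma sum_eq_card_mult_emp_mean: "(\<Sum>x\<in>A. u x) = real (card A) * emp_mean A u"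
  by (cases "card A = 0") (auto simp: emp_mean_def card_eq_0_iff)

lemma emp_cov_eq: "emp_cov A u v = (\<Sum>x\<in>A. u x * v x) / real (card A) - emp_mean A u * emp_mean A v"
proof (cases "card A = 0")
  case True
  then show ?thesis by (simp add: emp_cov_def emp_mean_def)
next
  case False
  have "(\<Sum>x\<in>A. (u x - emp_mean A u) * (v x - emp_mean A v)) =
      (\<Sum>x\<in>A. u x * v x) - emp_mean A v * (\<Sum>x\<in>A. u x) - emp_mean A u * (\<Sum>x\<in>A. v x)
        + real (card A) * emp_mean A u * emp_mean A v"
    by (simp add: algebra_simps sum.distrib sum_subtractf sum_distrib_left)
  also have "\<dots> = (\<Sum>x\<in>A. u x * v x) - real (card A) * emp_mean A u * emp_mean A v"
    by (simp add: sum_eq_card_mult_emp_mean[of u A] sum_eq_card_mult_emp_mean[of v A])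
  finally show ?thesis
    using False by (simp add: emp_cov_def diff_divide_distrib)
qed

lemma emp_mean_permutes_comp:
  assumes "\<pi> permutes A"
  shows "emp_mean A (\<lambda>x. u (\<pi> x)) = emp_mean A u"
  using sum_permutes_comp[OF assms, of u] by (simp add: emp_mean_def)

lemma emp_cov_pairing_eq:
  assumes "\<pi> permutes A"
  shows "emp_cov A f (\<lambda>x. f (\<phi> (\<pi> x))) =
    (\<Sum>x\<in>A. f x * f (\<phi> (\<pi> x))) / real (card A) - emp_mean A f * emp_mean A (\<lambda>x. f (\<phi> x))"
  using emp_mean_permutes_comp[OF assms, of "\<lambda>y. f (\<phi> y)"] by (simp add: emp_cov_eq)

lemma pairing_cost_le_iff_emp_cov_ge:
  assumes "\<pi> permutes A" "\<sigma> permutes A" "card A \<noteq> 0"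
  shows "pairing_cost f \<phi> A \<pi> \<le> pairing_cost f \<phi> A \<sigma> \<longleftrightarrow>
    emp_cov A f (\<lambda>x. f (\<phi> (\<sigma> x))) \<le> emp_cov A f (\<lambda>x. f (\<phi> (\<pi> x)))"
  using assms by (simp add: pairing_cost_expand emp_cov_pairing_eq divide_le_cancel)

lemma min_pairing_cost_le:
  assumes "finite A" "\<pi> permutes A"
  shows "min_pairing_cost f \<phi> A \<le> pairing_cost f \<phi> A \<pi>"
  using assms by (simp add: min_pairing_cost_def finite_permutations)

lemma min_pairing_cost_attained:
  assumes "finite A"
  obtains \<pi> where "\<pi> permutes A" "min_pairing_cost f \<phi> A = pairing_cost f \<phi> A \<pi>"
proof -
  have "min_pairing_cost f \<phi> A \<in> pairing_cost f \<phi> A ` {\<pi>. \<pi> permutes A}"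
    unfolding min_pairing_cost_def
    using assms by (intro Min_in) (auto simp: finite_permutations intro!: exI[of _ id] permutes_id)
  then show ?thesis using that by blast
qed

lemma min_pairing_cost_nonneg:
  assumes "finite A"
  shows "0 \<le> min_pairing_cost f \<phi> A"
  using min_pairing_cost_attained[OF assms] pairing_cost_nonneg by metis

lemma min_pairing_cost_le_wcm_D:
  assumes "finite A"
  shows "min_pairing_cost f \<phi> A \<le> wcm_D f \<phi> A"
  using min_pairing_cost_le[OF assms permutes_id] by (simp add: pairing_cost_id)

lemma min_pairing_cost_eq_0_iff:
  assumes "finite A"
  shows "min_pairing_cost f \<phi> A = 0 \<longleftrightarrow>
    (\<exists>\<pi>. \<pi> permutes A \<and> (\<forall>x\<in>A. f x = f (\<phi> (\<pi> x))))"
  using min_pairing_cost_attained[OF assms] min_pairing_cost_le[OF assms]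
    min_pairing_cost_nonneg[OF assms] pairing_cost_nonneg pairing_cost_eq_0_iff[OF assms]
  by (metis order_antisym)

lemma min_pairing_cost_scale:
  assumes "finite A"
  shows "min_pairing_cost (\<lambda>x. c * f x) \<phi> A = c\<^sup>2 * min_pairing_cost f \<phi> A"
proof -
  have "mono (\<lambda>t. c\<^sup>2 * t :: real)"
    by (intro monoI mult_left_mono) auto
  moreover have "finite (pairing_cost f \<phi> A ` {\<pi>. \<pi> permutes A})"
    using assms by (simp add: finite_permutations)
  moreover have "pairing_cost f \<phi> A ` {\<pi>. \<pi> permutes A} \<noteq> {}"
    using permutes_id by blast
  ultimately show ?thesis
    unfolding min_pairing_cost_def pairing_cost_scale image_image[symmetric]
    by (simp add: mono_Min_commute)
qed

lemma WCM_scale: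
  assumes "finite A" "c \<noteq> 0"
  shows "WCM \<phi> (\<lambda>x. c * f x) A = WCM \<phi> f A"
  using assms by (simp add: WCM_eq min_pairing_cost_scale wcm_D_scale)

lemma WCM_bounds:
  assumes "finite A" "wcm_D f \<phi> A \<noteq> 0"
  shows "WCM \<phi> f A \<in> {0..1}"
proof -
  have "0 \<le> min_pairing_cost f \<phi> A / wcm_D f \<phi> A" "min_pairing_cost f \<phi> A / wcm_D f \<phi> A \<le> 1"
    using assms min_pairing_cost_nonneg min_pairing_cost_le_wcm_D wcm_D_nonneg[of f \<phi> A]
    by (auto simp: divide_simps)
  then show ?thesis by (simp add: WCM_eq real_sqrt_le_1_iff)
qed

lemma WCM_eq_0_iff:
  assumes "finite A" "wcm_D f \<phi> A \<noteq> 0"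
  shows "WCM \<phi> f A = 0 \<longleftrightarrow> pairing_cost f \<phi> A id = min_pairing_cost f \<phi> A"
  using assms by (auto simp: WCM_eq pairing_cost_id)

lemma WCM_eq_1_iff:
  assumes "wcm_D f \<phi> A \<noteq> 0"
  shows "WCM \<phi> f A = 1 \<longleftrightarrow> min_pairing_cost f \<phi> A = 0"
  using assms by (simp add: WCM_eq)

lemma pairing_cost_id_eq_min_iff:
  assumes "finite A"
  shows "pairing_cost f \<phi> A id = min_pairing_cost f \<phi> A \<longleftrightarrow>
    (\<forall>\<pi>. \<pi> permutes A \<longrightarrow> pairing_cost f \<phi> A id \<le> pairing_cost f \<phi> A \<pi>)"
  using min_pairing_cost_le[OF assms] min_pairing_cost_attained[OF assms] permutes_id
  by (metis order_antisym)

theorem proposition2: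
  fixes f :: "'x \<Rightarrow> real" and \<phi> :: "'x \<Rightarrow> 'x" and A :: "'x set"
  assumes "finite A"
    and "wcm_D f \<phi> A \<noteq> 0"
  shows "WCM \<phi> f A \<in> {0..1}
    \<and> (WCM \<phi> f A = 0 \<longleftrightarrow>
         (\<forall>\<pi>. \<pi> permutes A \<longrightarrow>
            emp_cov A f (\<lambda>x. f (\<phi> (\<pi> x))) \<le> emp_cov A f (\<lambda>x. f (\<phi> x))))
    \<and> (WCM \<phi> f A = 0 \<longleftrightarrow>
         pairing_cost f \<phi> A id = Min ((\<lambda>\<pi>. pairing_cost f \<phi> A \<pi>) ` {\<pi>. \<pi> permutes A}))
    \<and> (WCM \<phi> f A = 1 \<longleftrightarrow>
         (\<exists>\<pi>. \<pi> permutes A \<and> \<pi> \<noteq> id \<and> (\<forall>x\<in>A. f x = f (\<phi> (\<pi> x)))))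
    \<and> (\<forall>c::real. c > 0 \<longrightarrow> WCM \<phi> f A = WCM \<phi> (\<lambda>x. c * f x) A)"
proof -
  have "card A \<noteq> 0"
    using assms by (auto simp: wcm_D_def)
  then have covariance: "WCM \<phi> f A = 0 \<longleftrightarrow>
      (\<forall>\<pi>. \<pi> permutes A \<longrightarrow> emp_cov A f (\<lambda>x. f (\<phi> (\<pi> x))) \<le> emp_cov A f (\<lambda>x. f (\<phi> x)))"
    using pairing_cost_le_iff_emp_cov_ge[OF permutes_id, of _ A f \<phi>]
    by (simp add: WCM_eq_0_iff[OF assms] pairing_cost_id_eq_min_iff[OF assms(1)])
  have "(\<exists>\<pi>. \<pi> permutes A \<and> (\<forall>x\<in>A. f x = f (\<phi> (\<pi> x)))) \<longleftrightarrow>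
      (\<exists>\<pi>. \<pi> permutes A \<and> \<pi> \<noteq> id \<and> (\<forall>x\<in>A. f x = f (\<phi> (\<pi> x))))"
    using assms pairing_cost_eq_0_iff[OF assms(1), of f \<phi> id] by (auto simp: pairing_cost_id)
  then have exact: "WCM \<phi> f A = 1 \<longleftrightarrow>
      (\<exists>\<pi>. \<pi> permutes A \<and> \<pi> \<noteq> id \<and> (\<forall>x\<in>A. f x = f (\<phi> (\<pi> x))))"
    by (simp add: WCM_eq_1_iff[OF assms(2)] min_pairing_cost_eq_0_iff[OF assms(1)])
  show ?thesis
    using WCM_bounds[OF assms] covariance WCM_eq_0_iff[OF assms] exact WCM_scale[OF assms(1)]
    by (auto simp: min_pairing_cost_def)
qed

end
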